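(* Let $f(X,I)=f_0(I)+f_1(I)X+f_2(I)X^2$ with $f_0,f_1,f_2$ smooth real functions on $[0,\infty)$. Put $\lambda:=f_0(1)$, $P_f(I):=(f_0(I)-\lambda I)/(1-I)$ (smoothly extended to $I=1$), $h_f(z,I):=P_f(I)+zf_1(I)+z^2(I+(1-I)f_2(I))$. Let $\mathcal{B}=\{(\beta_1,\beta_2):\beta_1>\beta_2\}$ and let $\mathcal{B}_f$ be the set of $\beta\in\mathcal{B}$ with $\beta_2\le\lambda\le\beta_1$ and $h_f(\beta_i,I)/(\beta_j-\beta_i)\ge0$ for all $I\in[0,1]$ and $\{i,j\}=\{1,2\}$. Define $\mathcal{B}_f^+:=\{z\ge\lambda: h_f(z,I)\le0\ \forall I\in[0,1]\}$ and $\mathcal{B}_f^-:=\{z\le\lambda: h_f(z,I)\ge 0\ \forall I\in[0,1]\}$. Then $\mathcal{B}_f=(\mathcal{B}_f^+\times\mathcal{B}_f^-)\cap\mathcal{B}$.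
   Context: Such an $f$ (an "$X^2$-model") defines the replacement number dynamics $\dot X=f(X,I)$, $\dot I=(X-1)I$; $\mathcal{B}_f$ is the set of $f$-compatible transmission pairs, i.e. those for which the associated SSISS model $\dot S_i=(-\beta_iS_i+\gamma_i)I-A_i(I)S_i+A_j(I)S_j-(\beta_i-\beta_j)f_2(I)S_1S_2$ with $A_i(I)=h_f(\beta_i,I)/(\beta_j-\beta_i)$, $\gamma_1+\gamma_2=1$, $\beta_1\gamma_1+\beta_2\gamma_2=\lambda$ satisfies $\gamma_i\ge0$, $A_i\ge0$ on $[0,1]$. *)

theory Defs
  imports "HOL-Analysis.Analysis"
begin

text \<open>C-infinity on a set S: a tower of successive derivatives (one-sided at boundary points of S).\<close>
definition smooth_on :: "(real \<Rightarrow> real) \<Rightarrow> real set \<Rightarrow> bool" where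
  "smooth_on g S \<longleftrightarrow> (\<exists>D :: nat \<Rightarrow> real \<Rightarrow> real. D 0 = g \<and>
      (\<forall>k. \<forall>x\<in>S. (D k has_real_derivative D (Suc k) x) (at x within S)))"

definition lam :: "(real \<Rightarrow> real) \<Rightarrow> real" where
  "lam f0 = f0 1"

text \<open>P_f(I) = (f0(I) - lambda I)/(1 - I), extended continuously (smoothly) at I = 1
  by its limit lambda - f0'(1).\<close>
definition Pf :: "(real \<Rightarrow> real) \<Rightarrow> real \<Rightarrow> real" where
  "Pf f0 I = (if I = 1 then lam f0 - deriv f0 1 else (f0 I - lam f0 * I) / (1 - I))"

definition hf :: "(real \<Rightarrow> real) \<Rightarrow> (real \<Rightarrow> real) \<Rightarrow> (real \<Rightarrow> real) \<Rightarrow> real \<Rightarrow> real \<Rightarrow> real" where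
  "hf f0 f1 f2 z I = Pf f0 I + z * f1 I + z^2 * (I + (1 - I) * f2 I)"

definition BB :: "(real \<times> real) set" where
  "BB = {(b1, b2). b1 > b2}"

definition Bf :: "(real \<Rightarrow> real) \<Rightarrow> (real \<Rightarrow> real) \<Rightarrow> (real \<Rightarrow> real) \<Rightarrow> (real \<times> real) set" where
  "Bf f0 f1 f2 = {(b1, b2) \<in> BB. b2 \<le> lam f0 \<and> lam f0 \<le> b1 \<and>
     (\<forall>I\<in>{0..1}. hf f0 f1 f2 b1 I / (b2 - b1) \<ge> 0 \<and> hf f0 f1 f2 b2 I / (b1 - b2) \<ge> 0)}"

definition Bf_plus :: "(real \<Rightarrow> real) \<Rightarrow> (real \<Rightarrow> real) \<Rightarrow> (real \<Rightarrow> real) \<Rightarrow> real set" where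
  "Bf_plus f0 f1 f2 = {z. z \<ge> lam f0 \<and> (\<forall>I\<in>{0..1}. hf f0 f1 f2 z I \<le> 0)}"

definition Bf_minus :: "(real \<Rightarrow> real) \<Rightarrow> (real \<Rightarrow> real) \<Rightarrow> (real \<Rightarrow> real) \<Rightarrow> real set" where
  "Bf_minus f0 f1 f2 = {z. z \<le> lam f0 \<and> (\<forall>I\<in>{0..1}. hf f0 f1 f2 z I \<ge> 0)}"

end

theory Submission
  imports Defs
begin

text \<open>For \<open>\<beta>\<^sub>1 > \<beta>\<^sub>2\<close> the denominators \<open>\<beta>\<^sub>j - \<beta>\<^sub>i\<close> have fixed signs, so the
  compatibility condition splits into \<open>h\<^sub>f(\<beta>\<^sub>1, I) \<le> 0\<close> and \<open>h\<^sub>f(\<beta>\<^sub>2, I) \<ge> 0\<close>, one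
  condition on each coordinate.\<close>

lemma divide_neg_nonneg_iff:
  fixes h a :: real
  assumes "a < 0"
  shows "0 \<le> h / a \<longleftrightarrow> h \<le> 0"
  using assms by (auto simp: zero_le_divide_iff)

lemma divide_pos_nonneg_iff:
  fixes h a :: real
  assumes "0 < a"
  shows "0 \<le> h / a \<longleftrightarrow> 0 \<le> h"
  using assms by (auto simp: zero_le_divide_iff)

lemma Pair_mem_Bf_iff:
  "(b1, b2) \<in> Bf f0 f1 f2 \<longleftrightarrow>
     b2 < b1 \<and> b1 \<in> Bf_plus f0 f1 f2 \<and> b2 \<in> Bf_minus f0 f1 f2"
proof (cases "b2 < b1")
  case True
  then have "0 \<le> hf f0 f1 f2 b1 I / (b2 - b1) \<longleftrightarrow> hf f0 f1 f2 b1 I \<le> 0"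
    and "0 \<le> hf f0 f1 f2 b2 I / (b1 - b2) \<longleftrightarrow> 0 \<le> hf f0 f1 f2 b2 I" for I
    by (simp_all add: divide_neg_nonneg_iff divide_pos_nonneg_iff)
  with True show ?thesis
    by (auto simp: Bf_def Bf_plus_def Bf_minus_def BB_def)
next
  case False
  then show ?thesis
    by (simp add: Bf_def BB_def)
qed

theorem lemma4p3:
  fixes f0 f1 f2 :: "real \<Rightarrow> real"
  assumes "smooth_on f0 {0..}" and "smooth_on f1 {0..}" and "smooth_on f2 {0..}"
  shows "Bf f0 f1 f2 = (Bf_plus f0 f1 f2 \<times> Bf_minus f0 f1 f2) \<inter> BB"
  by (auto simp: Pair_mem_Bf_iff BB_def)

end
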